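(* Let $v_1,v_2\in L_2(0,1)$, $\alpha\in[0,2\pi)$ and $v=v_1+e^{i\alpha}v_2$. For $w_1,w_2\in L_2(0,1)$ let $A(w_1,w_2,\alpha)$ denote the operator in $L_2(0,1)$ acting by $$A(w_1,w_2,\alpha)\psi(x)=i\psi'(x)+w_1(x)\Big[\psi(0)-\tfrac{i}{2}\langle\psi,w_1\rangle\Big]+w_2(x)\Big[\psi(1)+\tfrac{i}{2}\langle\psi,w_2\rangle\Big]$$ on the domain of $\psi\in W_2^1(0,1)$ with $\psi(1)+i\langle\psi,w_2\rangle=e^{i\alpha}[\psi(0)-i\langle\psi,w_1\rangle]$. Then $A(v_1,v_2,\alpha)$ and $A(v,0,\alpha)$ have the same domain (the domain of the latter being given by $\psi(1)=e^{i\alpha}[\psi(0)-i\langle\psi,v\rangle]$), and their difference is the bounded self-adjoint operator of rank at most $2$ $$\big[A(v_1,v_2,\alpha)-A(v,0,\alpha)\big]\psi=\tfrac{i}{2}e^{-i\alpha}v_1\langle\psi,v_2\rangle-\tfrac{i}{2}e^{i\alpha}v_2\langle\psi,v_1\rangle.$$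
   Context: $\langle f,g\rangle=\int_0^1 f\bar g\,dx$; $W_2^1(0,1)$ is the Sobolev space. *)

theory Defs
  imports "HOL-Analysis.Analysis"
begin

text \<open>Functions on (0,1) are modelled as maps real \<Rightarrow> complex; only values on [0,1] matter.\<close>

definition L2 :: "(real \<Rightarrow> complex) \<Rightarrow> bool" where
  "L2 f \<longleftrightarrow> set_borel_measurable lebesgue {0..1} f \<and>
            set_integrable lebesgue {0..1} (\<lambda>x. (cmod (f x))^2)"

definition ip :: "(real \<Rightarrow> complex) \<Rightarrow> (real \<Rightarrow> complex) \<Rightarrow> complex" where
  "ip f g = (LINT x:{0..1}|lebesgue. f x * cnj (g x))"

definition L2norm :: "(real \<Rightarrow> complex) \<Rightarrow> real" where
  "L2norm f = sqrt (LINT x:{0..1}|lebesgue. (cmod (f x))^2)"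

definition is_wderiv :: "(real \<Rightarrow> complex) \<Rightarrow> (real \<Rightarrow> complex) \<Rightarrow> bool" where
  "is_wderiv \<psi> g \<longleftrightarrow> L2 g \<and> (\<forall>x\<in>{0..1}. \<psi> x = \<psi> 0 + (LINT t:{0..x}|lebesgue. g t))"

text \<open>Sobolev space W_2^1(0,1) (continuous representatives).\<close>
definition W21 :: "(real \<Rightarrow> complex) \<Rightarrow> bool" where
  "W21 \<psi> \<longleftrightarrow> (\<exists>g. is_wderiv \<psi> g)"

definition wderiv :: "(real \<Rightarrow> complex) \<Rightarrow> real \<Rightarrow> complex" where
  "wderiv \<psi> = (SOME g. is_wderiv \<psi> g)"

definition Adom :: "(real \<Rightarrow> complex) \<Rightarrow> (real \<Rightarrow> complex) \<Rightarrow> real \<Rightarrow> (real \<Rightarrow> complex) set" where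
  "Adom w1 w2 \<alpha> = {\<psi>. W21 \<psi> \<and>
      \<psi> 1 + \<i> * ip \<psi> w2 = exp (\<i> * complex_of_real \<alpha>) * (\<psi> 0 - \<i> * ip \<psi> w1)}"

definition Aop :: "(real \<Rightarrow> complex) \<Rightarrow> (real \<Rightarrow> complex) \<Rightarrow> real \<Rightarrow> (real \<Rightarrow> complex) \<Rightarrow> real \<Rightarrow> complex" where
  "Aop w1 w2 \<alpha> \<psi> = (\<lambda>x. \<i> * wderiv \<psi> x
      + w1 x * (\<psi> 0 - \<i> / 2 * ip \<psi> w1)
      + w2 x * (\<psi> 1 + \<i> / 2 * ip \<psi> w2))"

definition bounded_L2op :: "((real \<Rightarrow> complex) \<Rightarrow> real \<Rightarrow> complex) \<Rightarrow> bool" where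
  "bounded_L2op T \<longleftrightarrow>
     (\<forall>\<psi>. L2 \<psi> \<longrightarrow> L2 (T \<psi>)) \<and>
     (\<forall>\<psi> \<phi> a b. L2 \<psi> \<longrightarrow> L2 \<phi> \<longrightarrow>
        (\<forall>x\<in>{0..1}. T (\<lambda>y. a * \<psi> y + b * \<phi> y) x = a * T \<psi> x + b * T \<phi> x)) \<and>
     (\<exists>C. \<forall>\<psi>. L2 \<psi> \<longrightarrow> L2norm (T \<psi>) \<le> C * L2norm \<psi>)"

definition selfadjoint_L2op :: "((real \<Rightarrow> complex) \<Rightarrow> real \<Rightarrow> complex) \<Rightarrow> bool" where
  "selfadjoint_L2op T \<longleftrightarrow> (\<forall>\<psi> \<phi>. L2 \<psi> \<longrightarrow> L2 \<phi> \<longrightarrow> ip (T \<psi>) \<phi> = ip \<psi> (T \<phi>))"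

definition rank_le_L2op :: "((real \<Rightarrow> complex) \<Rightarrow> real \<Rightarrow> complex) \<Rightarrow> nat \<Rightarrow> bool" where
  "rank_le_L2op T n \<longleftrightarrow> (\<exists>fs :: (real \<Rightarrow> complex) list. length fs \<le> n \<and>
     (\<forall>\<psi>. L2 \<psi> \<longrightarrow> (\<exists>cs :: complex list. length cs = length fs \<and>
        (AE x in lebesgue. x \<in> {0..1} \<longrightarrow> T \<psi> x = (\<Sum>i<length fs. cs ! i * (fs ! i) x)))))"

end

theory Submission
  imports Defs
begin

text \<open>
  Put \<open>E = e\<^sup>i\<^sup>\<alpha>\<close>. Since \<open>\<langle>\<psi>, v\<rangle> = \<langle>\<psi>, v\<^sub>1\<rangle> + conj E \<langle>\<psi>, v\<^sub>2\<rangle>\<close>, the boundary condition of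
  \<open>A(v\<^sub>1, v\<^sub>2, \<alpha>)\<close> is the boundary condition of \<open>A(v, 0, \<alpha>)\<close> with the term \<open>i\<langle>\<psi>, v\<^sub>2\<rangle>\<close>
  moved to the other side. Eliminating \<open>\<psi>(1)\<close> by this condition, the difference of the two
  actions becomes \<open>c v\<^sub>1\<langle>\<psi>, v\<^sub>2\<rangle> + conj c v\<^sub>2\<langle>\<psi>, v\<^sub>1\<rangle>\<close> with \<open>c = (i/2) conj E\<close>. Every operator
  of this shape is visibly of rank at most two and symmetric, and it is bounded by the
  Cauchy-Schwarz inequality, which we obtain by integrating the weighted AM-GM inequality
  \<open>|f| |g| \<le> (t |f|\<^sup>2 + |g|\<^sup>2 / t) / 2\<close> and optimising over \<open>t > 0\<close>.
\<close>

lemma le_sqrt_mult_if_le_weighted_means: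
  fixes a b c :: real
  assumes "0 \<le> a" "0 \<le> b" and bound: "\<And>t. t > 0 \<Longrightarrow> c \<le> (t * a + b / t) / 2"
  shows "c \<le> sqrt (a * b)"
proof (cases "a = 0 \<or> b = 0")
  case True
  have "c \<le> 0"
  proof (rule ccontr)
    assume "\<not> c \<le> 0"
    then have "c > 0" by simp
    show False
    proof (cases "a = 0")
      case True
      have "c \<le> b / ((b + 1) / c) / 2" using bound[of "(b + 1) / c"] \<open>c > 0\<close> \<open>0 \<le> b\<close> True by simp
      also have "\<dots> < c" using \<open>c > 0\<close> \<open>0 \<le> b\<close> by (simp add: field_simps add_nonneg_pos)
      finally show False by simp
    next
      case False
      with \<open>a = 0 \<or> b = 0\<close> have "b = 0" by simp
      have "c \<le> c / (a + 1) * a / 2" using bound[of "c / (a + 1)"] \<open>c > 0\<close> \<open>0 \<le> a\<close> \<open>b = 0\<close> by simp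
      also have "\<dots> < c" using \<open>c > 0\<close> \<open>0 \<le> a\<close> by (simp add: field_simps add_nonneg_pos)
      finally show False by simp
    qed
  qed
  then show ?thesis using assms(1,2) by (meson mult_nonneg_nonneg order_trans real_sqrt_ge_zero)
next
  case False
  with assms(1,2) have "sqrt a > 0" "sqrt b > 0" by auto
  have "c \<le> (sqrt b / sqrt a * a + b / (sqrt b / sqrt a)) / 2"
    using bound[of "sqrt b / sqrt a"] \<open>sqrt a > 0\<close> \<open>sqrt b > 0\<close> by simp
  also have "\<dots> = sqrt a * sqrt b"
    using assms(1,2) \<open>sqrt a > 0\<close> \<open>sqrt b > 0\<close>
    by (simp add: field_simps flip: real_sqrt_mult)
  finally show ?thesis by (simp add: real_sqrt_mult)
qed

lemma norm_add_power2_le: "(norm (u + w))\<^sup>2 \<le> 2 * (norm u)\<^sup>2 + 2 * (norm w)\<^sup>2"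
proof -
  have "(norm (u + w))\<^sup>2 \<le> (norm u + norm w)\<^sup>2"
    by (simp add: norm_triangle_ineq power_mono)
  also have "\<dots> \<le> 2 * (norm u)\<^sup>2 + 2 * (norm w)\<^sup>2"
    using sum_squares_bound[of "norm u" "norm w"] by (simp add: power2_eq_square algebra_simps)
  finally show ?thesis .
qed

lemma set_borel_measurable_compose_zero:
  fixes f :: "'a \<Rightarrow> 'b::real_normed_vector" and h :: "'b \<Rightarrow> 'c::real_normed_vector"
  assumes "set_borel_measurable M A f" "h \<in> borel_measurable borel" "h 0 = 0"
  shows "set_borel_measurable M A (\<lambda>x. h (f x))"
proof -
  have "(\<lambda>x. indicator A x *\<^sub>R h (f x)) = (\<lambda>x. h (indicator A x *\<^sub>R f x))"
    by (auto simp: indicator_def assms(3))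
  then show ?thesis
    using measurable_compose[OF assms(1,2)[unfolded set_borel_measurable_def]]
    by (simp add: set_borel_measurable_def)
qed

lemma borel_measurable_L2: "L2 f \<Longrightarrow> (\<lambda>x. indicator {0..1} x *\<^sub>R f x) \<in> borel_measurable lebesgue"
  by (simp add: L2_def set_borel_measurable_def)

lemma L2_continuous_on:
  assumes "continuous_on {0..1} f"
  shows "L2 f"
proof -
  have "set_integrable lebesgue {0..1} f"
    using absolutely_integrable_continuous_real[OF assms] by simp
  then have "set_borel_measurable lebesgue {0..1} f"
    unfolding set_borel_measurable_def set_integrable_def by (rule borel_measurable_integrable)
  moreover have "continuous_on {0..1} (\<lambda>x. (cmod (f x))\<^sup>2)"
    by (intro continuous_intros assms)
  then have "set_integrable lebesgue {0..1} (\<lambda>x. (cmod (f x))\<^sup>2)"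
    using absolutely_integrable_continuous_real by simp
  ultimately show ?thesis
    unfolding L2_def by simp
qed

lemma set_integrable_mult_cnj:
  assumes "L2 f" "L2 g"
  shows "set_integrable lebesgue {0..1} (\<lambda>x. f x * cnj (g x))"
proof (rule set_integrable_bound)
  show "set_integrable lebesgue {0..1} (\<lambda>x. ((cmod (f x))\<^sup>2 + (cmod (g x))\<^sup>2) / 2)"
    using assms by (auto simp: L2_def)
  have restrict: "(\<lambda>x. indicator {0..1} x *\<^sub>R (f x * cnj (g x)))
      = (\<lambda>x. (indicator {0..1} x *\<^sub>R f x) * cnj (indicator {0..1} x *\<^sub>R g x))"
    by (auto simp: indicator_def)
  show "set_borel_measurable lebesgue {0..1} (\<lambda>x. f x * cnj (g x))"
    unfolding set_borel_measurable_def restrict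
    by (intro borel_measurable_times borel_measurable_L2 assms
        borel_measurable_continuous_on[OF continuous_on_cnj[OF continuous_on_id]])
  show "AE x in lebesgue. x \<in> {0..1} \<longrightarrow>
      norm (f x * cnj (g x)) \<le> norm (((cmod (f x))\<^sup>2 + (cmod (g x))\<^sup>2) / 2)"
  proof (intro AE_I2 impI)
    fix x
    show "norm (f x * cnj (g x)) \<le> norm (((cmod (f x))\<^sup>2 + (cmod (g x))\<^sup>2) / 2)"
      using sum_squares_bound[of "cmod (f x)" "cmod (g x)"] by (simp add: norm_mult)
  qed
qed

lemma L2_lincomb:
  assumes "L2 f" "L2 g"
  shows "L2 (\<lambda>x. a * f x + b * g x)"
proof -
  have restrict: "(\<lambda>x. indicator {0..1} x *\<^sub>R (a * f x + b * g x))
      = (\<lambda>x. a * (indicator {0..1} x *\<^sub>R f x) + b * (indicator {0..1} x *\<^sub>R g x))"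
    by (auto simp: indicator_def)
  have meas: "set_borel_measurable lebesgue {0..1} (\<lambda>x. a * f x + b * g x)"
    unfolding set_borel_measurable_def restrict
    by (intro borel_measurable_add borel_measurable_times borel_measurable_const
        borel_measurable_L2 assms)
  have "set_integrable lebesgue {0..1} (\<lambda>x. (cmod (a * f x + b * g x))\<^sup>2)"
  proof (rule set_integrable_bound)
    show "set_integrable lebesgue {0..1}
        (\<lambda>x. 2 * (cmod a)\<^sup>2 * (cmod (f x))\<^sup>2 + 2 * (cmod b)\<^sup>2 * (cmod (g x))\<^sup>2)"
      using assms by (auto simp: L2_def)
    show "set_borel_measurable lebesgue {0..1} (\<lambda>x. (cmod (a * f x + b * g x))\<^sup>2)"
      by (rule set_borel_measurable_compose_zero[OF meas, where h = "\<lambda>z. (cmod z)\<^sup>2"]) auto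
    show "AE x in lebesgue. x \<in> {0..1} \<longrightarrow> norm ((cmod (a * f x + b * g x))\<^sup>2)
        \<le> norm (2 * (cmod a)\<^sup>2 * (cmod (f x))\<^sup>2 + 2 * (cmod b)\<^sup>2 * (cmod (g x))\<^sup>2)"
    proof (intro AE_I2 impI)
      fix x
      show "norm ((cmod (a * f x + b * g x))\<^sup>2)
          \<le> norm (2 * (cmod a)\<^sup>2 * (cmod (f x))\<^sup>2 + 2 * (cmod b)\<^sup>2 * (cmod (g x))\<^sup>2)"
        using norm_add_power2_le[of "a * f x" "b * g x"] by (simp add: norm_mult power_mult_distrib)
    qed
  qed
  with meas show ?thesis
    unfolding L2_def by simp
qed

lemma W21_imp_L2:
  assumes "W21 \<psi>"
  shows "L2 \<psi>"
proof -
  obtain g where "L2 g" and primitive: "\<forall>x\<in>{0..1}. \<psi> x = \<psi> 0 + (LINT t:{0..x}|lebesgue. g t)"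
    using assms unfolding W21_def is_wderiv_def by blast
  have "set_integrable lebesgue {0..1} g"
    using set_integrable_mult_cnj[OF \<open>L2 g\<close> L2_continuous_on[of "\<lambda>_. 1"]] by simp
  then have "g integrable_on {0..1}"
    by (rule set_lebesgue_integral_eq_integral(1))
  have "continuous_on {0..1} (\<lambda>x. \<psi> 0 + integral {0..x} g)"
    by (intro continuous_intros indefinite_integral_continuous_1 \<open>g integrable_on {0..1}\<close>)
  then have "continuous_on {0..1} \<psi>"
  proof (rule continuous_on_eq)
    fix x :: real assume "x \<in> {0..1}"
    then have "set_integrable lebesgue {0..x} g"
      by (intro set_integrable_subset[OF \<open>set_integrable lebesgue {0..1} g\<close>]) auto
    with primitive \<open>x \<in> {0..1}\<close> show "\<psi> 0 + integral {0..x} g = \<psi> x"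
      by (metis set_lebesgue_integral_eq_integral(2))
  qed
  then show ?thesis
    by (rule L2_continuous_on)
qed

lemma ip_lincomb_left:
  assumes "L2 f" "L2 g" "L2 w"
  shows "ip (\<lambda>x. a * f x + b * g x) w = a * ip f w + b * ip g w"
proof -
  have "ip (\<lambda>x. a * f x + b * g x) w
      = (LINT x:{0..1}|lebesgue. a * (f x * cnj (w x)) + b * (g x * cnj (w x)))"
    unfolding ip_def by (simp add: algebra_simps)
  also have "\<dots> = a * ip f w + b * ip g w"
    unfolding ip_def using assms by (simp add: set_integrable_mult_cnj)
  finally show ?thesis .
qed

lemma cnj_ip: "cnj (ip f g) = ip g f"
proof -
  have "cnj (ip f g) = (CLINT x|lebesgue. cnj (indicator {0..1} x *\<^sub>R (f x * cnj (g x))))"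
    unfolding ip_def set_lebesgue_integral_def by (rule Bochner_Integration.integral_cnj[symmetric])
  also have "\<dots> = ip g f"
    unfolding ip_def set_lebesgue_integral_def
    by (rule Bochner_Integration.integral_cong) (auto simp: indicator_def)
  finally show ?thesis .
qed

lemma ip_lincomb_right:
  assumes "L2 f" "L2 g" "L2 w"
  shows "ip w (\<lambda>x. a * f x + b * g x) = cnj a * ip w f + cnj b * ip w g"
  using ip_lincomb_left[OF assms, of a b] by (metis cnj_ip complex_cnj_add complex_cnj_mult)

lemma ip_zero_right [simp]: "ip f (\<lambda>_. 0) = 0"
  by (simp add: ip_def)

lemma L2norm_power2: "(L2norm f)\<^sup>2 = (LINT x:{0..1}|lebesgue. (cmod (f x))\<^sup>2)"
  and L2norm_nonneg: "0 \<le> L2norm f"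
proof -
  have "0 \<le> (LINT x:{0..1}|lebesgue. (cmod (f x))\<^sup>2)"
    unfolding set_lebesgue_integral_def by (rule integral_nonneg_AE) (simp add: indicator_def)
  then show "(L2norm f)\<^sup>2 = (LINT x:{0..1}|lebesgue. (cmod (f x))\<^sup>2)" "0 \<le> L2norm f"
    by (simp_all add: L2norm_def)
qed

lemma norm_ip_le:
  assumes "L2 f" "L2 g"
  shows "cmod (ip f g) \<le> L2norm f * L2norm g"
proof -
  have "cmod (ip f g) \<le> (t * (L2norm f)\<^sup>2 + (L2norm g)\<^sup>2 / t) / 2" if "t > 0" for t
  proof -
    have "cmod (ip f g) \<le> (LINT x:{0..1}|lebesgue. cmod (f x * cnj (g x)))"
      unfolding ip_def by (rule set_integral_norm_bound[OF set_integrable_mult_cnj[OF assms]])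
    also have "\<dots> \<le> (LINT x:{0..1}|lebesgue. (t * (cmod (f x))\<^sup>2 + (cmod (g x))\<^sup>2 / t) / 2)"
    proof (rule set_integral_mono)
      show "set_integrable lebesgue {0..1} (\<lambda>x. cmod (f x * cnj (g x)))"
        by (rule set_integrable_norm[OF set_integrable_mult_cnj[OF assms]])
      show "set_integrable lebesgue {0..1} (\<lambda>x. (t * (cmod (f x))\<^sup>2 + (cmod (g x))\<^sup>2 / t) / 2)"
        using assms by (auto simp: L2_def)
      fix x
      have "0 \<le> (t * cmod (f x) - cmod (g x))\<^sup>2 / t"
        using \<open>t > 0\<close> by simp
      then show "cmod (f x * cnj (g x)) \<le> (t * (cmod (f x))\<^sup>2 + (cmod (g x))\<^sup>2 / t) / 2"
        using \<open>t > 0\<close> by (simp add: norm_mult field_simps power2_eq_square)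
    qed
    also have "\<dots> = (t * (L2norm f)\<^sup>2 + (L2norm g)\<^sup>2 / t) / 2"
      using assms by (simp add: L2norm_power2 L2_def)
    finally show ?thesis .
  qed
  then have "cmod (ip f g) \<le> sqrt ((L2norm f)\<^sup>2 * (L2norm g)\<^sup>2)"
    by (intro le_sqrt_mult_if_le_weighted_means) auto
  then show ?thesis
    by (simp add: real_sqrt_mult L2norm_nonneg)
qed

lemma L2norm_lincomb_power2_le:
  assumes "L2 f" "L2 g"
  shows "(L2norm (\<lambda>x. a * f x + b * g x))\<^sup>2
    \<le> 2 * (cmod a)\<^sup>2 * (L2norm f)\<^sup>2 + 2 * (cmod b)\<^sup>2 * (L2norm g)\<^sup>2"
proof -
  have "(L2norm (\<lambda>x. a * f x + b * g x))\<^sup>2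
      \<le> (LINT x:{0..1}|lebesgue. 2 * (cmod a)\<^sup>2 * (cmod (f x))\<^sup>2 + 2 * (cmod b)\<^sup>2 * (cmod (g x))\<^sup>2)"
    unfolding L2norm_power2
  proof (rule set_integral_mono)
    show "set_integrable lebesgue {0..1} (\<lambda>x. (cmod (a * f x + b * g x))\<^sup>2)"
      using L2_lincomb[OF assms] by (simp add: L2_def)
    show "set_integrable lebesgue {0..1}
        (\<lambda>x. 2 * (cmod a)\<^sup>2 * (cmod (f x))\<^sup>2 + 2 * (cmod b)\<^sup>2 * (cmod (g x))\<^sup>2)"
      using assms by (auto simp: L2_def)
    fix x
    show "(cmod (a * f x + b * g x))\<^sup>2 \<le> 2 * (cmod a)\<^sup>2 * (cmod (f x))\<^sup>2 + 2 * (cmod b)\<^sup>2 * (cmod (g x))\<^sup>2"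
      using norm_add_power2_le[of "a * f x" "b * g x"] by (simp add: norm_mult power_mult_distrib)
  qed
  also have "\<dots> = 2 * (cmod a)\<^sup>2 * (L2norm f)\<^sup>2 + 2 * (cmod b)\<^sup>2 * (L2norm g)\<^sup>2"
    using assms by (simp add: L2norm_power2 L2_def)
  finally show ?thesis .
qed

definition hermitian_rank2 ::
    "complex \<Rightarrow> (real \<Rightarrow> complex) \<Rightarrow> (real \<Rightarrow> complex) \<Rightarrow> (real \<Rightarrow> complex) \<Rightarrow> real \<Rightarrow> complex" where
  "hermitian_rank2 c f g = (\<lambda>\<psi> x. c * f x * ip \<psi> g + cnj c * g x * ip \<psi> f)"

lemma hermitian_rank2_eq_lincomb:
  "hermitian_rank2 c f g \<psi> = (\<lambda>x. (c * ip \<psi> g) * f x + (cnj c * ip \<psi> f) * g x)"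
  by (simp add: hermitian_rank2_def fun_eq_iff algebra_simps)

lemma bounded_L2op_hermitian_rank2:
  assumes "L2 f" "L2 g"
  shows "bounded_L2op (hermitian_rank2 c f g)"
  unfolding bounded_L2op_def
proof (intro conjI allI impI exI)
  fix \<psi> \<phi> :: "real \<Rightarrow> complex" and a b
  show "L2 (hermitian_rank2 c f g \<psi>)"
    unfolding hermitian_rank2_eq_lincomb by (rule L2_lincomb[OF assms])
  assume "L2 \<psi>" "L2 \<phi>"
  then show "\<forall>x\<in>{0..1}. hermitian_rank2 c f g (\<lambda>y. a * \<psi> y + b * \<phi> y) x
      = a * hermitian_rank2 c f g \<psi> x + b * hermitian_rank2 c f g \<phi> x"
    by (simp add: hermitian_rank2_def ip_lincomb_left assms algebra_simps)
next
  fix \<psi> :: "real \<Rightarrow> complex"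
  assume "L2 \<psi>"
  let ?C = "2 * cmod c * L2norm f * L2norm g"
  have "(L2norm (hermitian_rank2 c f g \<psi>))\<^sup>2
      \<le> 2 * (cmod (c * ip \<psi> g))\<^sup>2 * (L2norm f)\<^sup>2 + 2 * (cmod (cnj c * ip \<psi> f))\<^sup>2 * (L2norm g)\<^sup>2"
    unfolding hermitian_rank2_eq_lincomb by (rule L2norm_lincomb_power2_le[OF assms])
  also have "\<dots> \<le> 2 * (cmod c * (L2norm \<psi> * L2norm g))\<^sup>2 * (L2norm f)\<^sup>2
      + 2 * (cmod c * (L2norm \<psi> * L2norm f))\<^sup>2 * (L2norm g)\<^sup>2"
    using norm_ip_le[OF \<open>L2 \<psi>\<close> assms(1)] norm_ip_le[OF \<open>L2 \<psi>\<close> assms(2)]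
    by (intro add_mono mult_right_mono mult_left_mono power_mono)
       (auto simp: norm_mult mult_left_mono)
  also have "\<dots> = (?C * L2norm \<psi>)\<^sup>2"
    by (simp add: power_mult_distrib)
  finally show "L2norm (hermitian_rank2 c f g \<psi>) \<le> ?C * L2norm \<psi>"
    by (rule power2_le_imp_le) (simp add: L2norm_nonneg)
qed

lemma selfadjoint_L2op_hermitian_rank2:
  assumes "L2 f" "L2 g"
  shows "selfadjoint_L2op (hermitian_rank2 c f g)"
  unfolding selfadjoint_L2op_def
proof (intro allI impI)
  fix \<psi> \<phi> assume "L2 \<psi>" "L2 \<phi>"
  have "ip (hermitian_rank2 c f g \<psi>) \<phi> = c * ip \<psi> g * ip f \<phi> + cnj c * ip \<psi> f * ip g \<phi>"
    unfolding hermitian_rank2_eq_lincomb using assms \<open>L2 \<phi>\<close> by (simp add: ip_lincomb_left)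
  also have "\<dots> = ip \<psi> (hermitian_rank2 c f g \<phi>)"
    unfolding hermitian_rank2_eq_lincomb using assms \<open>L2 \<psi>\<close>
    by (simp add: ip_lincomb_right) (simp add: cnj_ip algebra_simps)
  finally show "ip (hermitian_rank2 c f g \<psi>) \<phi> = ip \<psi> (hermitian_rank2 c f g \<phi>)" .
qed

lemma rank_le_L2op_hermitian_rank2: "rank_le_L2op (hermitian_rank2 c f g) 2"
  unfolding rank_le_L2op_def
proof (intro exI[of _ "[f, g]"] conjI allI impI)
  fix \<psi> :: "real \<Rightarrow> complex"
  show "\<exists>cs. length cs = length [f, g] \<and> (AE x in lebesgue. x \<in> {0..1} \<longrightarrow>
      hermitian_rank2 c f g \<psi> x = (\<Sum>i<length [f, g]. cs ! i * ([f, g] ! i) x))"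
    by (rule exI[of _ "[c * ip \<psi> g, cnj c * ip \<psi> f]"])
       (simp add: hermitian_rank2_eq_lincomb numeral_2_eq_2 lessThan_Suc)
qed simp

lemma ip_merged_right:
  assumes "L2 w1" "L2 w2" "L2 \<psi>"
  shows "ip \<psi> (\<lambda>x. w1 x + exp (\<i> * complex_of_real \<alpha>) * w2 x)
    = ip \<psi> w1 + exp (- \<i> * complex_of_real \<alpha>) * ip \<psi> w2"
  using ip_lincomb_right[OF assms, of 1 "exp (\<i> * complex_of_real \<alpha>)"] by (simp add: exp_cnj)

lemma Adom_eq_Adom_merged:
  assumes "L2 w1" "L2 w2"
  shows "Adom w1 w2 \<alpha> = Adom (\<lambda>x. w1 x + exp (\<i> * complex_of_real \<alpha>) * w2 x) (\<lambda>_. 0) \<alpha>"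
proof -
  have "\<psi> 1 + \<i> * ip \<psi> w2 = exp (\<i> * \<alpha>) * (\<psi> 0 - \<i> * ip \<psi> w1)
    \<longleftrightarrow> \<psi> 1 = exp (\<i> * \<alpha>) * (\<psi> 0 - \<i> * ip \<psi> (\<lambda>x. w1 x + exp (\<i> * \<alpha>) * w2 x))"
    if "W21 \<psi>" for \<psi>
  proof -
    have "exp (\<i> * \<alpha>) * exp (- \<i> * \<alpha>) = 1"
      by (simp flip: exp_add)
    then show ?thesis
      using ip_merged_right[OF assms W21_imp_L2[OF that]] by (auto simp: algebra_simps)
  qed
  then show ?thesis
    unfolding Adom_def by auto
qed

lemma Aop_diff_eq_hermitian_rank2:
  assumes "L2 w1" "L2 w2" "\<psi> \<in> Adom w1 w2 \<alpha>"
  shows "Aop w1 w2 \<alpha> \<psi> x - Aop (\<lambda>x. w1 x + exp (\<i> * complex_of_real \<alpha>) * w2 x) (\<lambda>_. 0) \<alpha> \<psi> x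
    = hermitian_rank2 (\<i> / 2 * exp (- \<i> * complex_of_real \<alpha>)) w1 w2 \<psi> x"
proof -
  let ?E = "exp (\<i> * complex_of_real \<alpha>)" and ?F = "exp (- \<i> * complex_of_real \<alpha>)"
  have "L2 \<psi>"
    using assms(3) by (simp add: Adom_def W21_imp_L2)
  have boundary: "\<psi> 1 = ?E * (\<psi> 0 - \<i> * ip \<psi> w1) - \<i> * ip \<psi> w2"
    using assms(3) by (simp add: Adom_def algebra_simps)
  have coefficient: "cnj (\<i> / 2 * ?F) = - \<i> / 2 * ?E"
    by (simp add: exp_cnj)
  have "?E * ?F = 1"
    by (simp flip: exp_add)
  then show ?thesis
    unfolding Aop_def hermitian_rank2_def ip_merged_right[OF assms(1,2) \<open>L2 \<psi>\<close>] boundary coefficient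
    by (simp add: algebra_simps)
qed

theorem theorem5p2:
  fixes v1 v2 v :: "real \<Rightarrow> complex" and \<alpha> :: real
  assumes "L2 v1" and "L2 v2"
    and "0 \<le> \<alpha>" and "\<alpha> < 2 * pi"
    and "v = (\<lambda>x. v1 x + exp (\<i> * complex_of_real \<alpha>) * v2 x)"
  defines "B \<equiv> (\<lambda>\<psi> x. \<i> / 2 * exp (- \<i> * complex_of_real \<alpha>) * v1 x * ip \<psi> v2
                     - \<i> / 2 * exp (\<i> * complex_of_real \<alpha>) * v2 x * ip \<psi> v1)"
  shows "Adom v1 v2 \<alpha> = Adom v (\<lambda>_. 0) \<alpha>
    \<and> (\<forall>\<psi>\<in>Adom v1 v2 \<alpha>. \<forall>x\<in>{0..1}. Aop v1 v2 \<alpha> \<psi> x - Aop v (\<lambda>_. 0) \<alpha> \<psi> x = B \<psi> x)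
    \<and> bounded_L2op B \<and> selfadjoint_L2op B \<and> rank_le_L2op B 2"
proof -
  have "B = hermitian_rank2 (\<i> / 2 * exp (- \<i> * complex_of_real \<alpha>)) v1 v2"
    by (simp add: B_def hermitian_rank2_def exp_cnj fun_eq_iff)
  then show ?thesis
    using Adom_eq_Adom_merged Aop_diff_eq_hermitian_rank2 bounded_L2op_hermitian_rank2
      selfadjoint_L2op_hermitian_rank2 rank_le_L2op_hermitian_rank2 assms(1,2,5)
    by simp
qed

end
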